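(* Let $T\ge1$ be an integer and $a\in(0,1]$. Define $\alpha_0=\alpha_{-1}=1$ and $\alpha_t=\frac{T-t+2}{T-t+1+a}\alpha_{t-1}$ for $t=1,\dots,T$. Then \begin{enumerate} \item $\alpha_T\ge\frac{(T+1)^{1-a}}{2^{1-a}}$; \item $\frac{\sum_{t=1}^T\alpha_t}{\alpha_T}\le4\left(1+\frac{T^a-1}{a}\right)$; \item $4\left(1+\frac{T^a-1}{a}\right)\le 8T^a\ln(T+1)$. \end{enumerate} *)

theory Defs
  imports "HOL-Analysis.Analysis"
begin

fun alpha_seq :: "nat \<Rightarrow> real \<Rightarrow> nat \<Rightarrow> real" where
  "alpha_seq T a 0 = 1"
| "alpha_seq T a (Suc t) =
     (real T - real (Suc t) + 2) / (real T - real (Suc t) + 1 + a) * alpha_seq T a t"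

end

theory Submission
  imports Defs
begin

text \<open>Each factor of the recursion dominates a power of a ratio of consecutive integers:
  by weighted AM-GM, \<open>((j + 2) / (j + 1)) powr (1 - a) \<le> (j + 1) / (j + a)\<close>. Telescoping gives
  \<open>alpha\<^sub>u \<ge> alpha\<^sub>t ((T - t + 2) / (T - u + 2)) powr (1 - a)\<close> for \<open>t \<le> u \<le> T\<close>.
  With \<open>t = 0, u = T\<close> this is (1); with \<open>u = T\<close> it bounds \<open>alpha\<^sub>t / alpha\<^sub>T\<close> by
  \<open>2 (T - t + 1) powr (a - 1)\<close>, and the sum of these is compared with the integral of
  \<open>x powr (a - 1)\<close>, giving (2). Part (3) follows from \<open>x powr a - 1 \<le> a x powr a ln x\<close>
  (that is, \<open>P - 1 \<le> P ln P\<close>) and \<open>1 + ln T \<le> 2 ln (T + 1)\<close>, i.e. \<open>e T \<le> (T + 1)\<^sup>2\<close>.\<close>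

lemma powr_le_affine:
  fixes x r :: real
  assumes "0 \<le> r" and "r \<le> 1" and "0 < x"
  shows "x powr r \<le> r * x + (1 - r)"
  using Youngs_inequality_0[of r "1 - r" x 1] assms by simp

lemma sum_powr_le_integral_bound:
  fixes a :: real
  assumes "0 < a" and "a \<le> 1" and "1 \<le> n"
  shows "(\<Sum>k=1..n. real k powr (a - 1)) \<le> 1 + (real n powr a - 1) / a"
  using assms(3)
proof (induction n rule: dec_induct)
  case base
  then show ?case by simp
next
  case (step n)
  have "real n powr a = real (Suc n) powr a * (real n / real (Suc n)) powr a"
    using step by (simp add: powr_divide)
  also have "\<dots> \<le> real (Suc n) powr a * (a * (real n / real (Suc n)) + (1 - a))"
    using powr_le_affine[of a "real n / real (Suc n)"] assms step
    by (intro mult_left_mono) auto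
  also have "\<dots> = real (Suc n) powr a - a * (real (Suc n) powr a / real (Suc n))"
    by (simp add: field_simps)
  also have "real (Suc n) powr a / real (Suc n) = real (Suc n) powr (a - 1)"
    by (simp add: powr_diff)
  finally have "real (Suc n) powr (a - 1) \<le> (real (Suc n) powr a - real n powr a) / a"
    using assms by (simp add: field_simps)
  with step.IH have "(\<Sum>k=1..Suc n. real k powr (a - 1))
      \<le> 1 + (real n powr a - 1) / a + (real (Suc n) powr a - real n powr a) / a"
    using step by simp
  also have "\<dots> = 1 + (real (Suc n) powr a - 1) / a"
    using assms by (simp add: field_simps)
  finally show ?case .
qed

lemma powr_minus_one_le:
  fixes x a :: real
  assumes "0 < x"
  shows "x powr a - 1 \<le> a * x powr a * ln x"
proof -
  have pos: "0 < x powr a" using assms by simp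
  have "ln (inverse (x powr a)) \<le> inverse (x powr a) - 1"
    using pos by (intro ln_le_minus_one) simp
  then have "- (a * ln x) \<le> inverse (x powr a) - 1"
    using assms by (simp add: ln_inverse ln_powr)
  then have "x powr a * (- (a * ln x)) \<le> x powr a * (inverse (x powr a) - 1)"
    using pos by (intro mult_left_mono) auto
  with pos show ?thesis by (simp add: algebra_simps)
qed

lemma one_plus_ln_le_two_ln_succ:
  fixes x :: real
  assumes "1 \<le> x"
  shows "1 + ln x \<le> 2 * ln (x + 1)"
proof -
  have "x * exp 1 \<le> (x + 1)\<^sup>2"
  proof -
    have "x * exp 1 \<le> x * 3" using assms exp_le by (intro mult_left_mono) auto
    also have "\<dots> \<le> (x + 1)\<^sup>2"
      using assms zero_le_power2[of "x - 1"] by (simp add: power2_eq_square algebra_simps)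
    finally show ?thesis .
  qed
  then have "ln (x * exp 1) \<le> ln ((x + 1)\<^sup>2)" using assms by simp
  with assms show ?thesis by (simp add: ln_mult ln_realpow)
qed

lemma powr_bound_le_ln_bound:
  fixes x a :: real
  assumes "1 \<le> x" and "0 < a"
  shows "4 * (1 + (x powr a - 1) / a) \<le> 8 * x powr a * ln (x + 1)"
proof -
  have P: "1 \<le> x powr a" using assms by (simp add: ge_one_powr_ge_zero)
  have "(x powr a - 1) / a \<le> x powr a * ln x"
    using powr_minus_one_le[of x a] assms by (simp add: divide_le_eq algebra_simps)
  then have "1 + (x powr a - 1) / a \<le> x powr a * (1 + ln x)"
    using P by (simp add: algebra_simps)
  also have "\<dots> \<le> x powr a * (2 * ln (x + 1))"
    using P one_plus_ln_le_two_ln_succ[OF assms(1)] by (intro mult_left_mono) auto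
  also have "\<dots> = 2 * x powr a * ln (x + 1)" by simp
  finally have "4 * (1 + (x powr a - 1) / a) \<le> 4 * (2 * x powr a * ln (x + 1))"
    by (rule mult_left_mono) simp
  then show ?thesis by simp
qed

lemma alpha_seq_pos:
  assumes "0 < a" and "t \<le> T"
  shows "0 < alpha_seq T a t"
  using assms(2)
proof (induction t)
  case 0
  then show ?case by simp
next
  case (Suc t)
  then have "0 < real T - real (Suc t) + 2" and "0 < real T - real (Suc t) + 1 + a"
    using assms(1) by auto
  with Suc show ?case by simp
qed

lemma powr_le_alpha_factor:
  fixes j a :: real
  assumes "1 \<le> j" and "0 < a" and "a \<le> 1"
  shows "((j + 2) / (j + 1)) powr (1 - a) \<le> (j + 1) / (j + a)"
proof -
  have "((j + 2) / (j + 1)) powr (1 - a) \<le> (1 - a) * ((j + 2) / (j + 1)) + a"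
    using powr_le_affine[of "1 - a" "(j + 2) / (j + 1)"] assms by simp
  also have "\<dots> = 1 + (1 - a) / (j + 1)"
    using assms by (simp add: field_simps)
  also have "\<dots> \<le> 1 + (1 - a) / (j + a)"
    using assms by (intro add_left_mono divide_left_mono) auto
  also have "\<dots> = (j + 1) / (j + a)"
    using assms by (simp add: field_simps)
  finally show ?thesis .
qed

lemma alpha_seq_growth:
  assumes "0 < a" and "a \<le> 1" and "t \<le> u" and "u \<le> T"
  shows "alpha_seq T a t * ((real T - real t + 2) / (real T - real u + 2)) powr (1 - a)
    \<le> alpha_seq T a u"
  using assms(3,4)
proof (induction u rule: dec_induct)
  case base
  then show ?case by simp
next
  case (step u)
  define c where "c = real T - real t + 2"
  define j where "j = real T - real (Suc u) + 1"
  have "1 \<le> j" using step by (simp add: j_def)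
  have shift: "real T - real (Suc u) + 2 = j + 1" by (simp add: j_def)
  have IH: "alpha_seq T a t * (c / (j + 2)) powr (1 - a) \<le> alpha_seq T a u"
    using step by (simp add: c_def j_def add.assoc)
  have "alpha_seq T a t * (c / (j + 1)) powr (1 - a)
      = alpha_seq T a t * (c / (j + 2)) powr (1 - a) * ((j + 2) / (j + 1)) powr (1 - a)"
    using \<open>1 \<le> j\<close> by (simp add: powr_mult[symmetric])
  also have "\<dots> \<le> alpha_seq T a u * ((j + 1) / (j + a))"
    using IH powr_le_alpha_factor[OF \<open>1 \<le> j\<close> assms(1,2)] alpha_seq_pos[OF assms(1), of u T] step
    by (intro mult_mono) auto
  also have "\<dots> = alpha_seq T a (Suc u)"
    by (simp add: j_def add.assoc)
  finally show ?case
    by (simp only: c_def shift)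
qed

lemma alpha_seq_last_lower_bound:
  assumes "0 < a" and "a \<le> 1"
  shows "(real T + 1) powr (1 - a) / 2 powr (1 - a) \<le> alpha_seq T a T"
proof -
  have "(real T + 1) powr (1 - a) / 2 powr (1 - a) = ((real T + 1) / 2) powr (1 - a)"
    by (simp add: powr_divide)
  also have "\<dots> \<le> ((real T + 2) / 2) powr (1 - a)"
    using assms by (intro powr_mono2) auto
  also have "\<dots> \<le> alpha_seq T a T"
    using alpha_seq_growth[OF assms, of 0 T T] by simp
  finally show ?thesis .
qed

lemma alpha_seq_ratio_last_le:
  assumes "0 < a" and "a \<le> 1" and "1 \<le> t" and "t \<le> T"
  shows "alpha_seq T a t / alpha_seq T a T \<le> 2 * real (T + 1 - t) powr (a - 1)"
proof -
  define k where "k = real (T + 1 - t)"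
  have "1 \<le> k" and k_succ: "k + 1 = real T - real t + 2"
    using assms by (simp_all add: k_def of_nat_diff)
  have pos_t: "0 < alpha_seq T a t" and pos_T: "0 < alpha_seq T a T"
    using alpha_seq_pos assms by auto
  have growth: "alpha_seq T a t * ((k + 1) / 2) powr (1 - a) \<le> alpha_seq T a T"
    using alpha_seq_growth[OF assms(1,2) assms(4) order_refl] by (simp add: k_succ)
  have "alpha_seq T a t / alpha_seq T a T
      \<le> alpha_seq T a t / (alpha_seq T a t * ((k + 1) / 2) powr (1 - a))"
    using growth pos_t pos_T \<open>1 \<le> k\<close> by (intro divide_left_mono) auto
  also have "\<dots> = 2 powr (1 - a) / (k + 1) powr (1 - a)"
    using pos_t \<open>1 \<le> k\<close> by (simp add: powr_divide)
  also have "\<dots> \<le> 2 / k powr (1 - a)"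
  proof (rule frac_le)
    show "2 powr (1 - a) \<le> 2"
      using assms powr_mono[of "1 - a" 1 2] by simp
    show "k powr (1 - a) \<le> (k + 1) powr (1 - a)"
      using \<open>1 \<le> k\<close> assms by (intro powr_mono2) auto
  qed (use \<open>1 \<le> k\<close> in auto)
  also have "\<dots> = 2 * k powr (a - 1)"
    using \<open>1 \<le> k\<close> by (simp add: powr_diff powr_minus_divide)
  finally show ?thesis by (simp add: k_def)
qed

lemma alpha_seq_sum_ratio_bound:
  assumes "1 \<le> T" and "0 < a" and "a \<le> 1"
  shows "(\<Sum>t=1..T. alpha_seq T a t) / alpha_seq T a T \<le> 4 * (1 + (real T powr a - 1) / a)"
proof -
  have "(\<Sum>t=1..T. alpha_seq T a t) / alpha_seq T a T
      = (\<Sum>t=1..T. alpha_seq T a t / alpha_seq T a T)"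
    by (simp add: sum_divide_distrib)
  also have "\<dots> \<le> (\<Sum>t=1..T. 2 * real (T + 1 - t) powr (a - 1))"
    using alpha_seq_ratio_last_le assms by (intro sum_mono) auto
  also have "\<dots> = 2 * (\<Sum>t=1..T. real t powr (a - 1))"
    using sum.atLeastAtMost_rev[of "\<lambda>t. real t powr (a - 1)" 1 T]
    by (simp add: sum_distrib_left)
  also have "\<dots> \<le> 2 * (1 + (real T powr a - 1) / a)"
    by (intro mult_left_mono sum_powr_le_integral_bound) (use assms in auto)
  also have "\<dots> \<le> 4 * (1 + (real T powr a - 1) / a)"
  proof -
    have "0 \<le> 1 + (real T powr a - 1) / a"
      using assms by (simp add: ge_one_powr_ge_zero)
    then show ?thesis by (intro mult_right_mono) auto
  qed
  finally show ?thesis .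
qed

theorem lemmaA7:
  fixes T :: nat and a :: real
  assumes "T \<ge> 1" and "0 < a" and "a \<le> 1"
  shows "alpha_seq T a T \<ge> (real T + 1) powr (1 - a) / 2 powr (1 - a)
    \<and> (\<Sum>t=1..T. alpha_seq T a t) / alpha_seq T a T \<le> 4 * (1 + (real T powr a - 1) / a)
    \<and> 4 * (1 + (real T powr a - 1) / a) \<le> 8 * real T powr a * ln (real T + 1)"
proof (intro conjI)
  show "alpha_seq T a T \<ge> (real T + 1) powr (1 - a) / 2 powr (1 - a)"
    using alpha_seq_last_lower_bound[OF assms(2,3)] .
  show "(\<Sum>t=1..T. alpha_seq T a t) / alpha_seq T a T \<le> 4 * (1 + (real T powr a - 1) / a)"
    using alpha_seq_sum_ratio_bound[OF assms] .
  show "4 * (1 + (real T powr a - 1) / a) \<le> 8 * real T powr a * ln (real T + 1)"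
    using powr_bound_le_ln_bound[of "real T" a] assms by simp
qed

end
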